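(* Let $n\ge2$, $1\le p\le\infty$ and $N\ge0$. Then: (i) $\phi_N$ is quasi-homogeneous of degree $N$ on $[0,R]$; (ii) $\phi_{N+1}(t)\le\phi(t)\phi_N(t)$ for every $t\in[0,R]$; (iii) $\phi_N(t)\le\phi(t)^N$ for every $t\in[0,R]$; (iv) the function $\varphi_N(t)=t\,\phi_N(t)$ is a gauge function of order $N+1$ on $[0,R]$.
   Context: $\omega(t)=\left(1+\frac{t}{(n-1)^{1/p}}\right)^{n-1}$ (with $(n-1)^{1/p}=1$ if $p=\infty$) and $\Psi(t)=(1+2t)\omega(t)$ for $t\ge0$; $R$ is the unique positive solution of $\Psi(t)=2$; $\phi(t)=\frac{\omega(t)-1}{1-2t\omega(t)}$ on $[0,R]$. On $[0,R]$ define recursively $\phi_0\equiv1$, $\omega_N(t)=\left(1+\frac{t\phi_N(t)}{(n-1)^{1/p}}\right)^{n-1}$, $\phi_{N+1}(t)=\frac{\omega_N(t)-1}{1-2t\omega_N(t)}$; these are well-defined nondecreasing functions $[0,R]\to[0,1]$. A function $g:J\to\mathbb{R}_+$ on an interval $J\subseteq\mathbb{R}_+$ containing $0$ is quasi-homogeneous of degree $r\ge0$ on $J$ if $g(\lambda t)\le\lambda^r g(t)$ for all $\lambda\in[0,1]$ and $t\in J$. A function $g:J\to J$ is a gauge function of order $r\ge1$ on $J$ if it is quasi-homogeneous of degree $r$ on $J$ and $g(t)\le t$ for all $t\in J$. *)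

theory Defs
  imports "HOL-Analysis.Analysis" "HOL-Library.Extended_Real"
begin

definition rootp :: "nat \<Rightarrow> ereal \<Rightarrow> real" where
  "rootp n p = (if p = \<infinity> then 1 else (real n - 1) powr (1 / real_of_ereal p))"

definition omega :: "nat \<Rightarrow> ereal \<Rightarrow> real \<Rightarrow> real" where
  "omega n p t = (1 + t / rootp n p) ^ (n - 1)"

definition Psi :: "nat \<Rightarrow> ereal \<Rightarrow> real \<Rightarrow> real" where
  "Psi n p t = (1 + 2 * t) * omega n p t"

definition RR :: "nat \<Rightarrow> ereal \<Rightarrow> real" where
  "RR n p = (THE t. t > 0 \<and> Psi n p t = 2)"

definition phi :: "nat \<Rightarrow> ereal \<Rightarrow> real \<Rightarrow> real" where
  "phi n p t = (omega n p t - 1) / (1 - 2 * t * omega n p t)"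

fun phiN :: "nat \<Rightarrow> ereal \<Rightarrow> nat \<Rightarrow> real \<Rightarrow> real" where
  "phiN n p 0 t = 1"
| "phiN n p (Suc N) t =
     (let w = (1 + t * phiN n p N t / rootp n p) ^ (n - 1) in (w - 1) / (1 - 2 * t * w))"

definition rpow :: "real \<Rightarrow> real \<Rightarrow> real" where
  "rpow x r = (if x = 0 then (if r = 0 then 1 else 0) else x powr r)"

definition quasi_homogeneous :: "real set \<Rightarrow> real \<Rightarrow> (real \<Rightarrow> real) \<Rightarrow> bool" where
  "quasi_homogeneous J r g \<longleftrightarrow> 0 \<le> r \<and> (\<forall>t\<in>J. 0 \<le> g t) \<and>
     (\<forall>l\<in>{0..1}. \<forall>t\<in>J. g (l * t) \<le> rpow l r * g t)"

definition gauge_function :: "real set \<Rightarrow> real \<Rightarrow> (real \<Rightarrow> real) \<Rightarrow> bool" where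
  "gauge_function J r g \<longleftrightarrow> 1 \<le> r \<and> (\<forall>t\<in>J. g t \<in> J) \<and>
     quasi_homogeneous J r g \<and> (\<forall>t\<in>J. g t \<le> t)"

end

theory Submission
  imports Defs
begin

text \<open>Every \<open>\<phi>\<^sub>N\<close> arises from \<open>\<phi>\<^sub>0 = 1\<close> by iterating the map
  \<open>u \<mapsto> ((1 + tu/a)\<^sup>m - 1) / (1 - 2t(1 + tu/a)\<^sup>m)\<close>, and \<open>\<phi>\<close> is this map applied to \<open>u = 1\<close>.
  The one estimate needed is that this map is dominated linearly: if \<open>t'u' \<le> c\<cdot>tu\<close> with
  \<open>c \<in> [0,1]\<close> and \<open>t' \<le> t\<close>, then its value at \<open>(t',u')\<close> is at most \<open>c\<close> times its value at \<open>(t,u)\<close>.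
  The numerator is handled by convexity, \<open>(1 + cy)\<^sup>m - 1 \<le> c((1 + y)\<^sup>m - 1)\<close>, and the denominator
  only grows. Taking \<open>c = \<phi>\<^sub>N(t)\<close> against \<open>u = 1\<close> gives (ii), taking \<open>c = \<lambda>\<^sup>N\<^sup>+\<^sup>1\<close> gives the
  quasi-homogeneity (i) by induction; (iii) and (iv) follow. Positivity of all denominators on
  \<open>[0,R]\<close> is the inequality \<open>\<Psi>(t) \<le> 2\<close>, i.e. \<open>\<phi>(t) \<le> 1\<close>.\<close>

lemma one_plus_mult_power_le:
  fixes s y :: real
  assumes "0 \<le> s" "s \<le> 1" "0 \<le> y"
  shows "(1 + s * y) ^ m - 1 \<le> s * ((1 + y) ^ m - 1)"
proof (induction m)
  case 0
  then show ?case by simp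
next
  case (Suc m)
  have "s * y \<le> y" "0 \<le> s * ((1 + y) ^ m - 1)"
    using assms by (simp_all add: mult_left_le_one_le)
  have "(1 + s * y) ^ Suc m - 1 = (1 + s * y) * ((1 + s * y) ^ m - 1) + s * y"
    by (simp add: algebra_simps)
  also have "\<dots> \<le> (1 + s * y) * (s * ((1 + y) ^ m - 1)) + s * y"
    using Suc assms by (intro add_right_mono mult_left_mono) auto
  also have "\<dots> \<le> (1 + y) * (s * ((1 + y) ^ m - 1)) + s * y"
    using \<open>s * y \<le> y\<close> \<open>0 \<le> s * ((1 + y) ^ m - 1)\<close> by (intro add_right_mono mult_right_mono) auto
  also have "\<dots> = s * ((1 + y) ^ Suc m - 1)"
    by (simp add: algebra_simps)
  finally show ?case .
qed

definition phi_step :: "real \<Rightarrow> nat \<Rightarrow> real \<Rightarrow> real \<Rightarrow> real" where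
  "phi_step a m t u = ((1 + t * u / a) ^ m - 1) / (1 - 2 * t * (1 + t * u / a) ^ m)"

lemma phi_step_le:
  fixes a c t t' u u' :: real
  assumes "0 < a" "0 \<le> t'" "t' \<le> t" "0 \<le> u'" "0 \<le> u" "0 \<le> c" "c \<le> 1"
    and scaled: "t' * u' \<le> c * (t * u)"
    and denom_pos: "0 < 1 - 2 * t * (1 + t * u / a) ^ m"
  shows "0 \<le> phi_step a m t' u'" "phi_step a m t' u' \<le> c * phi_step a m t u"
proof -
  define x y where "x = t' * u' / a" and "y = t * u / a"
  have "0 \<le> x" "0 \<le> y"
    using assms by (simp_all add: x_def y_def)
  have "x \<le> c * y"
    using scaled \<open>0 < a\<close> by (simp add: x_def y_def divide_right_mono)
  also have "\<dots> \<le> y"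
    using \<open>0 \<le> y\<close> \<open>0 \<le> c\<close> \<open>c \<le> 1\<close> by (metis mult_left_le_one_le)
  finally have "(1 + x) ^ m \<le> (1 + y) ^ m"
    using \<open>0 \<le> x\<close> by (intro power_mono) auto
  then have denom_le: "1 - 2 * t * (1 + y) ^ m \<le> 1 - 2 * t' * (1 + x) ^ m"
    using assms \<open>0 \<le> x\<close> by (simp add: mult_mono)
  have num_nonneg: "0 \<le> (1 + x) ^ m - 1"
    using \<open>0 \<le> x\<close> by (simp add: one_le_power)
  have "(1 + x) ^ m - 1 \<le> (1 + c * y) ^ m - 1"
    using \<open>0 \<le> x\<close> \<open>x \<le> c * y\<close> by (simp add: power_mono)
  also have "\<dots> \<le> c * ((1 + y) ^ m - 1)"
    using \<open>0 \<le> c\<close> \<open>c \<le> 1\<close> \<open>0 \<le> y\<close> by (rule one_plus_mult_power_le)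
  finally have num_le: "(1 + x) ^ m - 1 \<le> c * ((1 + y) ^ m - 1)" .
  have "0 < 1 - 2 * t * (1 + y) ^ m"
    using denom_pos by (simp add: y_def)
  then show "0 \<le> phi_step a m t' u'"
    using num_nonneg denom_le by (simp add: phi_step_def x_def[symmetric])
  have "phi_step a m t' u' \<le> c * ((1 + y) ^ m - 1) / (1 - 2 * t * (1 + y) ^ m)"
    unfolding phi_step_def x_def[symmetric]
    using num_nonneg num_le denom_le \<open>0 < 1 - 2 * t * (1 + y) ^ m\<close> by (intro frac_le) auto
  then show "phi_step a m t' u' \<le> c * phi_step a m t u"
    by (simp add: phi_step_def y_def)
qed

lemma rootp_pos:
  assumes "2 \<le> n" "1 \<le> p"
  shows "0 < rootp n p"
  using assms by (simp add: rootp_def)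

lemma phiN_Suc_eq_phi_step: "phiN n p (Suc N) t = phi_step (rootp n p) (n - 1) t (phiN n p N t)"
  by (simp add: phi_step_def Let_def)

lemma phi_eq_phi_step: "phi n p t = phi_step (rootp n p) (n - 1) t 1"
  by (simp add: phi_def omega_def phi_step_def)

lemma one_le_omega:
  assumes "2 \<le> n" "1 \<le> p" "0 \<le> t"
  shows "1 \<le> omega n p t"
  using rootp_pos[OF assms(1,2)] assms(3) unfolding omega_def by (intro one_le_power) simp

lemma omega_strict_mono:
  assumes "2 \<le> n" "1 \<le> p" "0 \<le> t" "t < s"
  shows "omega n p t < omega n p s"
  using rootp_pos[OF assms(1,2)] assms unfolding omega_def
  by (intro power_strict_mono) (auto simp: divide_strict_right_mono)

lemma Psi_strict_mono:
  assumes "2 \<le> n" "1 \<le> p" "0 \<le> t" "t < s"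
  shows "Psi n p t < Psi n p s"
proof -
  have "omega n p t < omega n p s" "1 \<le> omega n p t"
    using omega_strict_mono[OF assms] one_le_omega assms by auto
  then show ?thesis
    unfolding Psi_def using assms by (intro mult_strict_mono') auto
qed

lemma RR_pos_Psi_RR:
  assumes "2 \<le> n" "1 \<le> p"
  shows "0 < RR n p" "Psi n p (RR n p) = 2"
proof -
  have "continuous_on {0..1} (Psi n p)"
    unfolding Psi_def omega_def using rootp_pos[OF assms] by (intro continuous_intros) auto
  moreover have "Psi n p 0 \<le> 2" "2 \<le> Psi n p 1"
    using one_le_omega[OF assms, of 1] by (simp_all add: Psi_def omega_def)
  ultimately obtain x where x: "0 \<le> x" "Psi n p x = 2"
    using IVT'[of "Psi n p" 0 2 1] by auto
  then have "x \<noteq> 0"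
    by (auto simp: Psi_def omega_def)
  have "y = x" if "0 < y" "Psi n p y = 2" for y
    using Psi_strict_mono[OF assms, of x y] Psi_strict_mono[OF assms, of y x] x that
    by (cases y x rule: linorder_cases) auto
  with x \<open>x \<noteq> 0\<close> have "\<exists>!t. t > 0 \<and> Psi n p t = 2"
    by (intro ex1I[of _ x]) auto
  from theI'[OF this] show "0 < RR n p" "Psi n p (RR n p) = 2"
    unfolding RR_def by auto
qed

lemma Psi_le_two:
  assumes "2 \<le> n" "1 \<le> p" "0 \<le> t" "t \<le> RR n p"
  shows "Psi n p t \<le> 2"
  using Psi_strict_mono[OF assms(1-3), of "RR n p"] RR_pos_Psi_RR[OF assms(1,2)] assms(4)
  by (cases "t = RR n p") auto

lemma phi_denominator_pos:
  assumes "2 \<le> n" "1 \<le> p" "0 \<le> t" "t \<le> RR n p"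
  shows "0 < 1 - 2 * t * omega n p t"
proof (cases "t = 0")
  case False
  then have "1 < omega n p t"
    using omega_strict_mono[OF assms(1,2), of 0 t] assms(3) by (simp add: omega_def)
  then show ?thesis
    using Psi_le_two[OF assms] by (simp add: Psi_def algebra_simps)
qed simp

lemma phi_nonneg_le_one:
  assumes "2 \<le> n" "1 \<le> p" "0 \<le> t" "t \<le> RR n p"
  shows "0 \<le> phi n p t" "phi n p t \<le> 1"
  using phi_denominator_pos[OF assms] Psi_le_two[OF assms] one_le_omega[OF assms(1-3)]
  by (simp_all add: phi_def Psi_def algebra_simps)

lemma phiN_denominator_pos:
  assumes "2 \<le> n" "1 \<le> p" "0 \<le> t" "t \<le> RR n p" "0 \<le> u" "u \<le> 1"
  shows "0 < 1 - 2 * t * (1 + t * u / rootp n p) ^ (n - 1)"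
proof -
  have "(1 + t * u / rootp n p) ^ (n - 1) \<le> omega n p t"
    unfolding omega_def using assms rootp_pos[OF assms(1,2)]
    by (intro power_mono) (auto simp: divide_right_mono mult_left_le)
  then show ?thesis
    using phi_denominator_pos[OF assms(1-4)] assms(3) by (smt (verit) mult_left_mono)
qed

lemma phiN_Suc_le:
  assumes "2 \<le> n" "1 \<le> p" "0 \<le> t" "t \<le> RR n p" "0 \<le> phiN n p N t" "phiN n p N t \<le> 1"
  shows "0 \<le> phiN n p (Suc N) t" "phiN n p (Suc N) t \<le> phi n p t * phiN n p N t"
proof -
  have "t * phiN n p N t \<le> phiN n p N t * (t * 1)"
    by simp
  note step = phi_step_le[OF rootp_pos[OF assms(1,2)] assms(3) order_refl assms(5) zero_le_one
      assms(5,6) this phiN_denominator_pos[OF assms(1-4) zero_le_one order_refl]]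
  from step show "0 \<le> phiN n p (Suc N) t" "phiN n p (Suc N) t \<le> phi n p t * phiN n p N t"
    by (simp_all only: phiN_Suc_eq_phi_step phi_eq_phi_step mult.commute)
qed

lemma phiN_nonneg_le_one:
  assumes "2 \<le> n" "1 \<le> p" "0 \<le> t" "t \<le> RR n p"
  shows "0 \<le> phiN n p N t \<and> phiN n p N t \<le> 1"
proof (induction N)
  case (Suc N)
  then have "phi n p t * phiN n p N t \<le> 1"
    using phi_nonneg_le_one[OF assms] by (simp add: mult_le_one)
  with Suc show ?case
    using phiN_Suc_le[OF assms] by (meson order.trans)
qed simp

lemma phiN_scale:
  assumes "2 \<le> n" "1 \<le> p" "0 \<le> t" "t \<le> RR n p" "0 \<le> l" "l \<le> 1"
  shows "phiN n p N (l * t) \<le> l ^ N * phiN n p N t"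
proof (induction N)
  case (Suc N)
  have "0 \<le> l * t" "l * t \<le> t"
    using assms by (simp_all add: mult_left_le_one_le)
  then have bounds_lt: "0 \<le> phiN n p N (l * t)"
    using phiN_nonneg_le_one[OF assms(1,2)] assms(4) by auto
  have bounds_t: "0 \<le> phiN n p N t" "phiN n p N t \<le> 1"
    using phiN_nonneg_le_one[OF assms(1-4)] by auto
  have "l * t * phiN n p N (l * t) \<le> l * t * (l ^ N * phiN n p N t)"
    using Suc assms by (intro mult_left_mono) auto
  then have scaled: "l * t * phiN n p N (l * t) \<le> l ^ Suc N * (t * phiN n p N t)"
    by (simp add: algebra_simps)
  have "l ^ Suc N \<le> 1"
    using assms(5,6) by (rule power_le_one)
  from phi_step_le(2)[OF rootp_pos[OF assms(1,2)] \<open>0 \<le> l * t\<close> \<open>l * t \<le> t\<close> bounds_lt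
      bounds_t(1) zero_le_power[OF assms(5)] this scaled phiN_denominator_pos[OF assms(1-4) bounds_t]]
  show ?case
    by (simp only: phiN_Suc_eq_phi_step)
qed simp

lemma phiN_le_phi_power:
  assumes "2 \<le> n" "1 \<le> p" "0 \<le> t" "t \<le> RR n p"
  shows "phiN n p N t \<le> phi n p t ^ N"
proof (induction N)
  case (Suc N)
  have "phiN n p (Suc N) t \<le> phi n p t * phiN n p N t"
    using phiN_Suc_le[OF assms] phiN_nonneg_le_one[OF assms] by auto
  also have "\<dots> \<le> phi n p t ^ Suc N"
    using Suc phi_nonneg_le_one[OF assms] by (simp add: mult_left_mono)
  finally show ?case .
qed simp

lemma rpow_of_nat: "0 \<le> l \<Longrightarrow> rpow l (real N) = l ^ N"
  by (auto simp: rpow_def powr_realpow)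

lemma quasi_homogeneous_phiN:
  assumes "2 \<le> n" "1 \<le> p"
  shows "quasi_homogeneous {0..RR n p} (real N) (phiN n p N)"
  unfolding quasi_homogeneous_def
  using phiN_scale[OF assms] phiN_nonneg_le_one[OF assms] by (simp add: rpow_of_nat)

lemma gauge_function_phiN:
  assumes "2 \<le> n" "1 \<le> p"
  shows "gauge_function {0..RR n p} (real (N + 1)) (\<lambda>t. t * phiN n p N t)"
proof -
  have below: "t * phiN n p N t \<in> {0..RR n p} \<and> t * phiN n p N t \<le> t"
    if "t \<in> {0..RR n p}" for t
    using phiN_nonneg_le_one[OF assms, of t N] that by (auto intro: mult_left_le order.trans)
  have "l * t * phiN n p N (l * t) \<le> rpow l (real (N + 1)) * (t * phiN n p N t)"
    if "l \<in> {0..1}" "t \<in> {0..RR n p}" for l t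
  proof -
    have "l * t * phiN n p N (l * t) \<le> l * t * (l ^ N * phiN n p N t)"
      using phiN_scale[OF assms, of t l N] that by (intro mult_left_mono) auto
    then show ?thesis
      using that rpow_of_nat[of l "N + 1"] by (simp add: algebra_simps)
  qed
  with below show ?thesis
    unfolding gauge_function_def quasi_homogeneous_def
    by auto
qed

theorem lemma2p3:
  fixes n N :: nat and p :: ereal
  assumes "2 \<le> n" and "1 \<le> p"
  shows "quasi_homogeneous {0..RR n p} (real N) (phiN n p N)
    \<and> (\<forall>t\<in>{0..RR n p}. phiN n p (Suc N) t \<le> phi n p t * phiN n p N t)
    \<and> (\<forall>t\<in>{0..RR n p}. phiN n p N t \<le> phi n p t ^ N)
    \<and> gauge_function {0..RR n p} (real (N + 1)) (\<lambda>t. t * phiN n p N t)"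
proof (intro conjI ballI)
  fix t assume "t \<in> {0..RR n p}"
  then have t: "0 \<le> t" "t \<le> RR n p"
    by auto
  show "phiN n p (Suc N) t \<le> phi n p t * phiN n p N t"
    using phiN_Suc_le(2)[OF assms t] phiN_nonneg_le_one[OF assms t] by blast
  show "phiN n p N t \<le> phi n p t ^ N"
    using phiN_le_phi_power[OF assms t] .
qed (fact quasi_homogeneous_phiN[OF assms] gauge_function_phiN[OF assms])+

end
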